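(* Let $H$ be a Hopf algebra over a field $\mathbb{k}$ containing a subalgebra $P$ which is either a polynomial algebra $\mathbb{k}[x]$ or a Laurent polynomial algebra $\mathbb{k}[x^{\pm1}]$, such that $H$ is finitely generated as a right $P$-module. Let $N$ be a positive integer and $q_1(x),\dots,q_N(x)\in P$ pairwise coprime. Then $\bigcap_{\alpha=1}^N(q_\alpha(x))=\big(\prod_{\alpha=1}^Nq_\alpha(x)\big)$ as left ideals of $H$.
   Context: For $h\in H$, $(h)=Hh$ denotes the principal left ideal of $H$ generated by $h$. *)

theory Defs
  imports "HOL-Computational_Algebra.Polynomial"
begin

(* A k-algebra structure on a ring 'h: a ring homomorphism iota from the field 'k
   into the centre of 'h.  Scalar multiplication is  c . h = iota c * h. *)
definition alg_emb :: "('k::field \<Rightarrow> 'h::ring_1) \<Rightarrow> bool" where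
  "alg_emb iota \<longleftrightarrow> iota 0 = 0 \<and> iota 1 = 1 \<and>
     (\<forall>a b. iota (a + b) = iota a + iota b) \<and>
     (\<forall>a b. iota (a * b) = iota a * iota b) \<and>
     (\<forall>c h. iota c * h = h * iota c)"

definition lin_fun :: "('k::field \<Rightarrow> 'h::ring_1) \<Rightarrow> ('h \<Rightarrow> 'k) \<Rightarrow> bool" where
  "lin_fun iota phi \<longleftrightarrow> (\<forall>a b. phi (a + b) = phi a + phi b) \<and>
     (\<forall>c a. phi (iota c * a) = c * phi a)"

(* Elements of H (x) H are represented by finite lists of pairs (sum of a_i (x) b_i),
   elements of H (x) H (x) H by lists of triples.  Two representatives denote the same
   tensor iff all functionals phi (x) psi (resp. phi (x) psi (x) chi) agree on them
   (over a field, such functionals separate points of the tensor product). *)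
definition tens_eq2 :: "('k::field \<Rightarrow> 'h::ring_1) \<Rightarrow> ('h \<times> 'h) list \<Rightarrow> ('h \<times> 'h) list \<Rightarrow> bool" where
  "tens_eq2 iota t u \<longleftrightarrow> (\<forall>phi psi. lin_fun iota phi \<and> lin_fun iota psi \<longrightarrow>
     sum_list (map (\<lambda>(a, b). phi a * psi b) t) = sum_list (map (\<lambda>(a, b). phi a * psi b) u))"

definition tens_eq3 :: "('k::field \<Rightarrow> 'h::ring_1) \<Rightarrow> ('h \<times> 'h \<times> 'h) list \<Rightarrow> ('h \<times> 'h \<times> 'h) list \<Rightarrow> bool" where
  "tens_eq3 iota t u \<longleftrightarrow> (\<forall>phi psi chi. lin_fun iota phi \<and> lin_fun iota psi \<and> lin_fun iota chi \<longrightarrow>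
     sum_list (map (\<lambda>(a, b, c). phi a * psi b * chi c) t) =
     sum_list (map (\<lambda>(a, b, c). phi a * psi b * chi c) u))"

definition comul_left :: "('h \<Rightarrow> ('h \<times> 'h) list) \<Rightarrow> ('h \<times> 'h) list \<Rightarrow> ('h \<times> 'h \<times> 'h) list" where
  "comul_left Delta t = concat (map (\<lambda>(a, b). map (\<lambda>(c, d). (c, d, b)) (Delta a)) t)"

definition comul_right :: "('h \<Rightarrow> ('h \<times> 'h) list) \<Rightarrow> ('h \<times> 'h) list \<Rightarrow> ('h \<times> 'h \<times> 'h) list" where
  "comul_right Delta t = concat (map (\<lambda>(a, b). map (\<lambda>(c, d). (a, c, d)) (Delta b)) t)"

definition tmul :: "('h::ring_1 \<times> 'h) list \<Rightarrow> ('h \<times> 'h) list \<Rightarrow> ('h \<times> 'h) list" where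
  "tmul t u = concat (map (\<lambda>(a, b). map (\<lambda>(c, d). (a * c, b * d)) u) t)"

definition hopf_algebra ::
  "('k::field \<Rightarrow> 'h::ring_1) \<Rightarrow> ('h \<Rightarrow> ('h \<times> 'h) list) \<Rightarrow> ('h \<Rightarrow> 'k) \<Rightarrow> ('h \<Rightarrow> 'h) \<Rightarrow> bool" where
  "hopf_algebra iota Delta eps S \<longleftrightarrow>
     alg_emb iota \<and>
     \<comment> \<open>Delta is k-linear\<close>
     (\<forall>a b. tens_eq2 iota (Delta (a + b)) (Delta a @ Delta b)) \<and>
     (\<forall>c a. tens_eq2 iota (Delta (iota c * a)) (map (\<lambda>(u, v). (iota c * u, v)) (Delta a))) \<and>
     \<comment> \<open>coassociativity\<close>
     (\<forall>h. tens_eq3 iota (comul_left Delta (Delta h)) (comul_right Delta (Delta h))) \<and>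
     \<comment> \<open>Delta is an algebra map\<close>
     (\<forall>a b. tens_eq2 iota (Delta (a * b)) (tmul (Delta a) (Delta b))) \<and>
     tens_eq2 iota (Delta 1) [(1, 1)] \<and>
     \<comment> \<open>counit: an algebra map H -> k\<close>
     lin_fun iota eps \<and> eps 1 = 1 \<and> (\<forall>a b. eps (a * b) = eps a * eps b) \<and>
     (\<forall>h. sum_list (map (\<lambda>(a, b). iota (eps a) * b) (Delta h)) = h) \<and>
     (\<forall>h. sum_list (map (\<lambda>(a, b). a * iota (eps b)) (Delta h)) = h) \<and>
     \<comment> \<open>antipode: k-linear and convolution inverse of the identity\<close>
     (\<forall>a b. S (a + b) = S a + S b) \<and> (\<forall>c a. S (iota c * a) = iota c * S a) \<and>
     (\<forall>h. sum_list (map (\<lambda>(a, b). S a * b) (Delta h)) = iota (eps h)) \<and>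
     (\<forall>h. sum_list (map (\<lambda>(a, b). a * S b) (Delta h)) = iota (eps h))"

definition peval :: "('k::field \<Rightarrow> 'h::ring_1) \<Rightarrow> 'k poly \<Rightarrow> 'h \<Rightarrow> 'h" where
  "peval iota p x = (\<Sum>i\<le>degree p. iota (coeff p i) * x ^ i)"

definition poly_subalg :: "('k::field \<Rightarrow> 'h::ring_1) \<Rightarrow> 'h set \<Rightarrow> 'h \<Rightarrow> bool" where
  "poly_subalg iota P x \<longleftrightarrow> inj (\<lambda>p. peval iota p x) \<and> P = {peval iota p x | p. True}"

(* P is the Laurent polynomial algebra k[x^{+-1}]: x invertible with inverse y,
   P the image of k[t,t^-1] (elements p(t) t^-n) under t |-> x, and the map injective *)
definition laurent_subalg :: "('k::field \<Rightarrow> 'h::ring_1) \<Rightarrow> 'h set \<Rightarrow> 'h \<Rightarrow> bool" where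
  "laurent_subalg iota P x \<longleftrightarrow> (\<exists>y. x * y = 1 \<and> y * x = 1 \<and>
     (\<forall>p n. peval iota p x * y ^ n = 0 \<longrightarrow> p = 0) \<and>
     P = {peval iota p x * y ^ n | p n. True})"

definition coprime_in :: "'h::ring_1 set \<Rightarrow> 'h \<Rightarrow> 'h \<Rightarrow> bool" where
  "coprime_in P a b \<longleftrightarrow> (\<forall>d\<in>P. (\<exists>u\<in>P. a = u * d) \<and> (\<exists>v\<in>P. b = v * d) \<longrightarrow>
     (\<exists>e\<in>P. d * e = 1))"

definition lideal :: "'h::ring_1 \<Rightarrow> 'h set" where
  "lideal h = {a * h | a. True}"

end

theory Submission
  imports Defs
begin

(* P is the image of the Euclidean ring k[t], possibly localised at t, so every element of P
   is a unit of P times the image of a polynomial. A gcd of the polynomial parts of two coprime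
   elements a, b of P is then a common divisor in P, hence a unit, and the Bezout identity for
   polynomials becomes u a + v b = 1 with u, v in the commutative ring P. For such a and b,
   every h in H a \<inter> H b satisfies h = h u a + h v b \<in> H a b. Comaximality passes to
   products, so induction on N gives the claim. *)

lemma alg_embD:
  assumes "alg_emb iota"
  shows alg_emb_zero: "iota 0 = 0"
    and alg_emb_one: "iota 1 = 1"
    and alg_emb_add: "iota (a + b) = iota a + iota b"
    and alg_emb_mult: "iota (a * b) = iota a * iota b"
    and alg_emb_commute: "iota c * h = h * iota c"
  using assms unfolding alg_emb_def by blast+

lemma peval_eq_sum_lessThan:
  assumes emb: "alg_emb iota" and "degree p < n"
  shows "peval iota p x = (\<Sum>i<n. iota (coeff p i) * x ^ i)"
  unfolding peval_def using assms
  by (intro sum.mono_neutral_left) (auto simp: alg_emb_zero[OF emb] coeff_eq_0)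

lemma peval_pCons:
  assumes emb: "alg_emb iota"
  shows "peval iota (pCons a p) x = iota a + x * peval iota p x"
proof -
  let ?m = "Suc (degree p)"
  have shift: "iota c * x ^ Suc i = x * (iota c * x ^ i)" for c i
    by (metis alg_emb_commute[OF emb] mult.assoc power_Suc)
  have "degree (pCons a p) < Suc ?m"
    by (simp add: degree_pCons_le le_imp_less_Suc)
  then have "peval iota (pCons a p) x = (\<Sum>i<Suc ?m. iota (coeff (pCons a p) i) * x ^ i)"
    by (rule peval_eq_sum_lessThan[OF emb])
  also have "\<dots> = iota a + (\<Sum>i<?m. x * (iota (coeff p i) * x ^ i))"
    by (simp only: sum.lessThan_Suc_shift shift coeff_pCons_0 coeff_pCons_Suc power_0 mult_1_right)
  also have "\<dots> = iota a + x * peval iota p x"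
    by (simp only: peval_eq_sum_lessThan[OF emb lessI] sum_distrib_left)
  finally show ?thesis .
qed

lemma peval_1: "alg_emb iota \<Longrightarrow> peval iota 1 x = 1"
  by (simp add: peval_def alg_emb_one)

lemma peval_add:
  assumes emb: "alg_emb iota"
  shows "peval iota (p + q) x = peval iota p x + peval iota q x"
proof -
  let ?n = "Suc (max (degree p) (degree q))"
  have "degree (p + q) < ?n"
    by (simp add: degree_add_le le_imp_less_Suc)
  then show ?thesis
    by (simp add: peval_eq_sum_lessThan[OF emb, of _ ?n] alg_emb_add[OF emb] distrib_right
        sum.distrib)
qed

lemma peval_smult:
  assumes emb: "alg_emb iota"
  shows "peval iota (smult a p) x = iota a * peval iota p x"
proof -
  have "degree (smult a p) < Suc (degree p)"
    by (simp add: le_imp_less_Suc)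
  then have "peval iota (smult a p) x = (\<Sum>i<Suc (degree p). iota (a * coeff p i) * x ^ i)"
    by (simp only: peval_eq_sum_lessThan[OF emb] coeff_smult)
  also have "\<dots> = iota a * peval iota p x"
    by (simp only: peval_eq_sum_lessThan[OF emb lessI] alg_emb_mult[OF emb] sum_distrib_left
        mult.assoc)
  finally show ?thesis .
qed

lemma peval_mult:
  assumes emb: "alg_emb iota"
  shows "peval iota (p * q) x = peval iota p x * peval iota q x"
proof (induction p rule: pCons_induct)
  case 0
  then show ?case
    by (simp add: peval_def alg_emb_zero[OF emb])
next
  case (pCons a p)
  have "peval iota (pCons a p * q) x = peval iota (smult a q + pCons 0 (p * q)) x"
    by simp
  also have "\<dots> = (iota a + x * peval iota p x) * peval iota q x"
    using pCons.IH
    by (simp add: peval_add[OF emb] peval_smult[OF emb] peval_pCons[OF emb] alg_emb_zero[OF emb]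
        distrib_right mult.assoc)
  finally show ?case
    by (simp add: peval_pCons[OF emb])
qed

definition comm_subring :: "'a::ring_1 set \<Rightarrow> bool" where
  "comm_subring R \<longleftrightarrow> 1 \<in> R \<and> (\<forall>a\<in>R. - a \<in> R) \<and>
     (\<forall>a\<in>R. \<forall>b\<in>R. a + b \<in> R \<and> a * b \<in> R \<and> a * b = b * a)"

definition comaximal :: "'a::ring_1 set \<Rightarrow> 'a \<Rightarrow> 'a \<Rightarrow> bool" where
  "comaximal R a b \<longleftrightarrow> (\<exists>u\<in>R. \<exists>v\<in>R. u * a + v * b = 1)"

lemma comm_subringD:
  assumes "comm_subring R"
  shows comm_subring_one: "1 \<in> R"
    and comm_subring_add: "a \<in> R \<Longrightarrow> b \<in> R \<Longrightarrow> a + b \<in> R"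
    and comm_subring_mult: "a \<in> R \<Longrightarrow> b \<in> R \<Longrightarrow> a * b \<in> R"
    and comm_subring_commute: "a \<in> R \<Longrightarrow> b \<in> R \<Longrightarrow> a * b = b * a"
  using assms unfolding comm_subring_def by blast+

lemma comm_subring_zero: "comm_subring R \<Longrightarrow> 0 \<in> R"
  unfolding comm_subring_def by (metis add.right_inverse)

lemma prod_list_in_comm_subring:
  "comm_subring R \<Longrightarrow> set xs \<subseteq> R \<Longrightarrow> prod_list xs \<in> R"
  by (induction xs) (auto simp: comm_subringD)

lemma comaximal_mult:
  assumes R: "comm_subring R" and "a \<in> R" "b \<in> R"
    and "comaximal R a c" "comaximal R b c"
  shows "comaximal R (a * b) c"
proof -
  obtain u v where "u \<in> R" "v \<in> R" and uv: "u * a + v * c = 1"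
    using \<open>comaximal R a c\<close> unfolding comaximal_def by blast
  obtain u' v' where "u' \<in> R" "v' \<in> R" and uv': "u' * b + v' * c = 1"
    using \<open>comaximal R b c\<close> unfolding comaximal_def by blast
  have "a * u' = u' * a"
    using R \<open>a \<in> R\<close> \<open>u' \<in> R\<close> by (rule comm_subring_commute)
  have "1 = u * a * (u' * b + v' * c) + v * c"
    using uv uv' by simp
  also have "\<dots> = u * a * u' * b + (u * a * v' + v) * c"
    by (simp add: distrib_left distrib_right mult.assoc add.assoc)
  also have "u * a * u' * b = (u * u') * (a * b)"
    using \<open>a * u' = u' * a\<close> by (simp add: mult.assoc)
  finally have "(u * u') * (a * b) + (u * a * v' + v) * c = 1"
    by simp
  moreover have "u * u' \<in> R" "u * a * v' + v \<in> R"
    using R \<open>u \<in> R\<close> \<open>v \<in> R\<close> \<open>a \<in> R\<close> \<open>u' \<in> R\<close> \<open>v' \<in> R\<close>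
    by (simp_all add: comm_subringD)
  ultimately show ?thesis
    unfolding comaximal_def by blast
qed

lemma comaximal_prod_list:
  assumes R: "comm_subring R" and "set xs \<subseteq> R" "\<forall>a\<in>set xs. comaximal R a c"
  shows "comaximal R (prod_list xs) c"
  using assms(2,3)
proof (induction xs)
  case Nil
  show ?case
    using comm_subring_one[OF R] comm_subring_zero[OF R] unfolding comaximal_def
    by (intro bexI[of _ 1] bexI[of _ 0]) auto
next
  case (Cons a xs)
  then show ?case
    using prod_list_in_comm_subring[OF R] by (simp add: comaximal_mult[OF R])
qed

lemma lideal_Int_lideal:
  assumes R: "comm_subring R" and "a \<in> R" "b \<in> R" and "comaximal R a b"
  shows "lideal a \<inter> lideal b = lideal (a * b)"
proof
  have ab: "a * b = b * a"
    using R \<open>a \<in> R\<close> \<open>b \<in> R\<close> by (rule comm_subring_commute)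
  show "lideal (a * b) \<subseteq> lideal a \<inter> lideal b"
    unfolding lideal_def by (auto simp flip: mult.assoc) (metis ab mult.assoc)
  show "lideal a \<inter> lideal b \<subseteq> lideal (a * b)"
  proof
    fix h
    assume "h \<in> lideal a \<inter> lideal b"
    then obtain a' b' where ha: "h = a' * a" and hb: "h = b' * b"
      unfolding lideal_def by blast
    obtain u v where "u \<in> R" "v \<in> R" and uv: "u * a + v * b = 1"
      using \<open>comaximal R a b\<close> unfolding comaximal_def by blast
    have "b * u = u * b" "a * v = v * a"
      using R \<open>a \<in> R\<close> \<open>b \<in> R\<close> \<open>u \<in> R\<close> \<open>v \<in> R\<close> by (simp_all add: comm_subring_commute)
    \<comment> \<open>Multiply h = h (u a + v b) out, using h = b' b in the first and h = a' a in the second term.\<close>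
    have "h = b' * b * u * a + a' * a * v * b"
      using uv ha hb by (metis distrib_left mult.assoc mult_1_right)
    also have "\<dots> = (b' * u + a' * v) * (a * b)"
      using \<open>b * u = u * b\<close> \<open>a * v = v * a\<close> ab by (simp add: distrib_right mult.assoc)
    finally show "h \<in> lideal (a * b)"
      unfolding lideal_def by blast
  qed
qed

lemma INT_lideal_eq_lideal_prod_list:
  assumes R: "comm_subring R"
    and "\<forall>i\<in>{1..n}. q i \<in> R"
    and "\<forall>i\<in>{1..n}. \<forall>j\<in>{1..n}. i \<noteq> j \<longrightarrow> comaximal R (q i) (q j)"
  shows "(\<Inter>i\<in>{1..n}. lideal (q i)) = lideal (prod_list (map q [1..<Suc n]))"
  using assms(2,3)
proof (induction n)
  case 0
  then show ?case
    unfolding lideal_def by auto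
next
  case (Suc n)
  let ?Q = "prod_list (map q [1..<Suc n])"
  have "?Q \<in> R"
    using Suc.prems by (intro prod_list_in_comm_subring[OF R]) auto
  moreover have "comaximal R ?Q (q (Suc n))"
    using Suc.prems by (intro comaximal_prod_list[OF R]) auto
  moreover have "(\<Inter>i\<in>{1..Suc n}. lideal (q i)) = (\<Inter>i\<in>{1..n}. lideal (q i)) \<inter> lideal (q (Suc n))"
    by (simp add: atLeastAtMostSuc_conv Int_commute)
  ultimately show ?case
    using Suc by (simp add: lideal_Int_lideal[OF R])
qed

locale comm_ring_hom =
  fixes \<phi> :: "'p::comm_ring_1 \<Rightarrow> 'a::ring_1"
  assumes hom_add: "\<phi> (p + q) = \<phi> p + \<phi> q"
    and hom_mult: "\<phi> (p * q) = \<phi> p * \<phi> q"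
    and hom_one: "\<phi> 1 = 1"
begin

lemma hom_uminus: "\<phi> (- p) = - \<phi> p"
  using hom_add[of p "- p"] hom_add[of 0 0] by (simp add: eq_neg_iff_add_eq_0 add.commute)

lemma hom_power: "\<phi> (p ^ n) = \<phi> p ^ n"
  by (induction n) (simp_all add: hom_one hom_mult)

lemma hom_commute: "\<phi> p * \<phi> q = \<phi> q * \<phi> p"
  by (metis hom_mult mult.commute)

lemma comm_subring_range: "comm_subring (range \<phi>)"
  unfolding comm_subring_def
  by (auto simp: hom_commute simp flip: hom_one hom_add hom_mult hom_uminus)

context
  fixes t :: 'p and y :: 'a
  assumes inverse: "\<phi> t * y = 1" "y * \<phi> t = 1"
begin

lemma inverse_commute: "y * \<phi> p = \<phi> p * y"
proof -
  have "y * \<phi> p = y * (\<phi> p * \<phi> t) * y"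
    using inverse by (simp add: mult.assoc)
  also have "\<dots> = \<phi> p * y"
    using inverse by (simp add: hom_commute[of p t] mult.assoc[symmetric])
  finally show ?thesis .
qed

lemma inverse_power_commute: "y ^ n * \<phi> p = \<phi> p * y ^ n"
  by (rule power_commuting_commutes[OF inverse_commute])

lemma localization_mult: "(\<phi> p * y ^ m) * (\<phi> q * y ^ n) = \<phi> (p * q) * y ^ (m + n)"
proof -
  have "(\<phi> p * y ^ m) * (\<phi> q * y ^ n) = \<phi> p * (y ^ m * \<phi> q) * y ^ n"
    by (simp only: mult.assoc)
  also have "\<dots> = \<phi> (p * q) * y ^ (m + n)"
    by (simp only: inverse_power_commute hom_mult power_add mult.assoc)
  finally show ?thesis .
qed

lemma power_inverse: "\<phi> t ^ n * y ^ n = 1"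
proof (induction n)
  case (Suc n)
  have "\<phi> t ^ Suc n * y ^ Suc n = \<phi> t * (\<phi> t ^ n * y ^ n) * y"
    by (simp add: power_commutes mult.assoc)
  then show ?case
    using Suc inverse by simp
qed simp

lemma localization_rescale: "\<phi> p * y ^ m = \<phi> (p * t ^ n) * y ^ (n + m)"
proof -
  have "\<phi> (p * t ^ n) * y ^ (n + m) = \<phi> p * (\<phi> t ^ n * y ^ n) * y ^ m"
    by (simp add: hom_mult hom_power power_add mult.assoc)
  then show ?thesis
    by (simp add: power_inverse)
qed

lemma comm_subring_localization: "comm_subring {\<phi> p * y ^ n | p n. True}"
proof -
  let ?L = "{\<phi> p * y ^ n | p n. True}"
  have "1 = \<phi> 1 * y ^ 0"
    by (simp add: hom_one)
  then have "1 \<in> ?L"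
    by blast
  moreover have "- a \<in> ?L" if "a \<in> ?L" for a
  proof -
    obtain p n where "a = \<phi> p * y ^ n"
      using \<open>a \<in> ?L\<close> by blast
    then have "- a = \<phi> (- p) * y ^ n"
      by (simp add: hom_uminus)
    then show ?thesis
      by blast
  qed
  moreover have "a + b \<in> ?L \<and> a * b \<in> ?L \<and> a * b = b * a" if "a \<in> ?L" "b \<in> ?L" for a b
  proof -
    obtain p m q n where a: "a = \<phi> p * y ^ m" and b: "b = \<phi> q * y ^ n"
      using \<open>a \<in> ?L\<close> \<open>b \<in> ?L\<close> by blast
    have "a + b = \<phi> (p * t ^ n + q * t ^ m) * y ^ (n + m)"
      using localization_rescale[of p m n] localization_rescale[of q n m]
      by (simp add: a b hom_add distrib_right add.commute)
    moreover have "a * b = \<phi> (p * q) * y ^ (m + n)" "b * a = \<phi> (p * q) * y ^ (m + n)"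
      by (simp_all add: a b localization_mult mult.commute add.commute)
    ultimately show ?thesis
      by auto
  qed
  ultimately show ?thesis
    unfolding comm_subring_def by blast
qed

lemma localization_eq_unit_mult:
  assumes "a \<in> {\<phi> p * y ^ n | p n. True}"
  shows "\<exists>p u v. u \<in> {\<phi> p * y ^ n | p n. True} \<and> v \<in> {\<phi> p * y ^ n | p n. True} \<and>
    v * u = 1 \<and> a = u * \<phi> p"
proof -
  obtain p n where a: "a = \<phi> p * y ^ n"
    using assms by blast
  have "a = y ^ n * \<phi> p"
    by (simp add: a inverse_power_commute)
  have "y ^ n = \<phi> 1 * y ^ n" "\<phi> t ^ n = \<phi> (t ^ n) * y ^ 0"
    by (simp_all add: hom_one hom_power)
  then have "y ^ n \<in> {\<phi> p * y ^ n | p n. True}" "\<phi> t ^ n \<in> {\<phi> p * y ^ n | p n. True}"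
    by blast+
  with \<open>a = y ^ n * \<phi> p\<close> show ?thesis
    using power_inverse[of n]
    by (intro exI[of _ p] exI[of _ "y ^ n"] exI[of _ "\<phi> t ^ n"]) simp
qed

end

end

lemma euclidean_ring_bezout:
  fixes a b :: "'a::euclidean_ring"
  shows "\<exists>s t g. s * a + t * b = g \<and> g dvd a \<and> g dvd b"
proof (induction b arbitrary: a rule: measure_induct_rule[where f = euclidean_size])
  case (less b a)
  show ?case
  proof (cases "b = 0")
    case True
    then show ?thesis
      by (intro exI[of _ 1] exI[of _ 0] exI[of _ a]) simp
  next
    case False
    then obtain s t g where st: "s * b + t * (a mod b) = g" and g: "g dvd b" "g dvd a mod b"
      using less mod_size_less by blast
    have "a mod b = a - a div b * b"
      by (simp add: minus_div_mult_eq_mod)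
    with st have "t * a + (s - t * (a div b)) * b = g"
      by (simp add: algebra_simps)
    moreover have "g dvd a"
      using g by (simp add: dvd_mod_iff)
    ultimately show ?thesis
      using g by blast
  qed
qed

lemma comaximal_if_coprime_in:
  fixes \<phi> :: "'p::euclidean_ring \<Rightarrow> 'a::ring_1"
  assumes "comm_ring_hom \<phi>" and R: "comm_subring R" and "range \<phi> \<subseteq> R"
    and unit_mult: "\<forall>a\<in>R. \<exists>p u v. u \<in> R \<and> v \<in> R \<and> v * u = 1 \<and> a = u * \<phi> p"
    and "a \<in> R" "b \<in> R" and "coprime_in R a b"
  shows "comaximal R a b"
proof -
  interpret comm_ring_hom \<phi> by fact
  obtain pa ua va where "ua \<in> R" "va \<in> R" "va * ua = 1" and a: "a = ua * \<phi> pa"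
    using unit_mult \<open>a \<in> R\<close> by blast
  obtain pb ub vb where "ub \<in> R" "vb \<in> R" "vb * ub = 1" and b: "b = ub * \<phi> pb"
    using unit_mult \<open>b \<in> R\<close> by blast
  obtain s t g where bezout: "s * pa + t * pb = g" and "g dvd pa" "g dvd pb"
    using euclidean_ring_bezout by blast
  then obtain ra rb where "pa = g * ra" "pb = g * rb"
    by (auto elim!: dvdE)
  then have "a = (ua * \<phi> ra) * \<phi> g" "b = (ub * \<phi> rb) * \<phi> g"
    using a b by (simp_all add: hom_mult hom_commute[of g] mult.assoc)
  moreover have "ua * \<phi> ra \<in> R" "ub * \<phi> rb \<in> R" "\<phi> g \<in> R"
    using \<open>ua \<in> R\<close> \<open>ub \<in> R\<close> \<open>range \<phi> \<subseteq> R\<close> by (blast intro: comm_subring_mult[OF R])+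
  ultimately obtain e where "e \<in> R" and "\<phi> g * e = 1"
    using \<open>coprime_in R a b\<close> unfolding coprime_in_def by blast
  have "va * a = \<phi> pa" "vb * b = \<phi> pb"
    using a b \<open>va * ua = 1\<close> \<open>vb * ub = 1\<close> by (simp_all flip: mult.assoc)
  have "1 = e * \<phi> g"
    using R \<open>e \<in> R\<close> \<open>\<phi> g \<in> R\<close> \<open>\<phi> g * e = 1\<close> by (simp add: comm_subring_commute)
  also have "\<phi> g = (\<phi> s * va) * a + (\<phi> t * vb) * b"
    using bezout \<open>va * a = \<phi> pa\<close> \<open>vb * b = \<phi> pb\<close> by (auto simp: hom_add hom_mult mult.assoc)
  finally have "(e * \<phi> s * va) * a + (e * \<phi> t * vb) * b = 1"
    by (simp add: distrib_left mult.assoc)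
  moreover have "e * \<phi> s * va \<in> R" "e * \<phi> t * vb \<in> R"
    using \<open>e \<in> R\<close> \<open>va \<in> R\<close> \<open>vb \<in> R\<close> \<open>range \<phi> \<subseteq> R\<close>
    by (blast intro: comm_subring_mult[OF R])+
  ultimately show ?thesis
    unfolding comaximal_def by blast
qed

lemma comm_ring_hom_peval: "alg_emb iota \<Longrightarrow> comm_ring_hom (\<lambda>p. peval iota p x)"
  by unfold_locales (simp_all add: peval_add peval_mult peval_1)

lemma peval_X: "alg_emb iota \<Longrightarrow> peval iota [:0, 1:] x = x"
  by (simp add: peval_pCons alg_emb_zero peval_1 flip: one_pCons)

lemma poly_or_laurent_subalgE:
  assumes emb: "alg_emb iota" and "poly_subalg iota P x \<or> laurent_subalg iota P x"
  obtains "comm_subring P" and "range (\<lambda>p. peval iota p x) \<subseteq> P"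
    and "\<forall>a\<in>P. \<exists>p u v. u \<in> P \<and> v \<in> P \<and> v * u = 1 \<and> a = u * peval iota p x"
proof -
  interpret comm_ring_hom "\<lambda>p. peval iota p x"
    using emb by (rule comm_ring_hom_peval)
  consider "P = {peval iota p x | p. True}"
    | y where "x * y = 1" "y * x = 1" "P = {peval iota p x * y ^ n | p n. True}"
    using assms(2) unfolding poly_subalg_def laurent_subalg_def by blast
  then show ?thesis
  proof cases
    case 1
    then have P: "P = range (\<lambda>p. peval iota p x)"
      by auto
    have "\<forall>a\<in>P. \<exists>p u v. u \<in> P \<and> v \<in> P \<and> v * u = 1 \<and> a = u * peval iota p x"
    proof
      fix a
      assume "a \<in> P"
      then obtain p where "a = 1 * peval iota p x"
        using P by auto
      then show "\<exists>p u v. u \<in> P \<and> v \<in> P \<and> v * u = 1 \<and> a = u * peval iota p x"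
        using P comm_subring_one[OF comm_subring_range] by (intro exI[of _ p] exI[of _ 1]) simp
    qed
    with P comm_subring_range show ?thesis
      by (intro that) simp_all
  next
    case (2 y)
    then have inverse: "peval iota [:0, 1:] x * y = 1" "y * peval iota [:0, 1:] x = 1"
      using emb by (simp_all add: peval_X)
    have "peval iota p x = peval iota p x * y ^ 0" for p
      by simp
    then have "range (\<lambda>p. peval iota p x) \<subseteq> P"
      using 2 by blast
    with 2 show ?thesis
      using comm_subring_localization[OF inverse] localization_eq_unit_mult[OF inverse]
      by (intro that) simp_all
  qed
qed

theorem lemma2p10:
  fixes iota :: "'k::field \<Rightarrow> 'h::ring_1"
    and Delta :: "'h \<Rightarrow> ('h \<times> 'h) list" and eps :: "'h \<Rightarrow> 'k" and S :: "'h \<Rightarrow> 'h"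
    and P :: "'h set" and x :: 'h and N :: nat and q :: "nat \<Rightarrow> 'h"
  assumes "hopf_algebra iota Delta eps S"
    and "poly_subalg iota P x \<or> laurent_subalg iota P x"
    and "\<exists>G. finite G \<and> (\<forall>h. \<exists>c. (\<forall>g\<in>G. c g \<in> P) \<and> h = (\<Sum>g\<in>G. g * c g))"
    and "N \<ge> 1"
    and "\<forall>\<alpha>\<in>{1..N}. q \<alpha> \<in> P"
    and "\<forall>\<alpha>\<in>{1..N}. \<forall>\<beta>\<in>{1..N}. \<alpha> \<noteq> \<beta> \<longrightarrow> coprime_in P (q \<alpha>) (q \<beta>)"
  shows "(\<Inter>\<alpha>\<in>{1..N}. lideal (q \<alpha>)) = lideal (prod_list (map q [1..<Suc N]))"
proof -
  have emb: "alg_emb iota"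
    using assms(1) unfolding hopf_algebra_def by blast
  obtain R: "comm_subring P" and range: "range (\<lambda>p. peval iota p x) \<subseteq> P"
    and unit_mult: "\<forall>a\<in>P. \<exists>p u v. u \<in> P \<and> v \<in> P \<and> v * u = 1 \<and> a = u * peval iota p x"
    using poly_or_laurent_subalgE[OF emb assms(2)] .
  note comaximal = comaximal_if_coprime_in[OF comm_ring_hom_peval[OF emb] R range unit_mult]
  have "\<forall>\<alpha>\<in>{1..N}. \<forall>\<beta>\<in>{1..N}. \<alpha> \<noteq> \<beta> \<longrightarrow> comaximal P (q \<alpha>) (q \<beta>)"
    using assms(5,6) by (blast intro: comaximal)
  then show ?thesis
    by (rule INT_lideal_eq_lideal_prod_list[OF R assms(5)])
qed

end
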